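(* Let $g(t)=\sum_{n\ge0}g_nt^n$ be a real formal power series with $g_0=1$ and let $f(t)=\sum_{n\ge1}f_nt^n$ be a real formal power series with $f_1\ne0$. If the quasi-Riordan array $[g,f]$ is totally positive, then $f$ is a Pólya frequency power series, i.e. its coefficient sequence $(f_n)_{n\ge0}$ (with $f_0=0$) is a Pólya frequency sequence.
   Context: The quasi-Riordan array $[g,f]$ is the infinite lower triangular matrix $(r_{n,k})_{n,k\ge0}$ with $r_{n,0}=g_n$ and $r_{n,k}=[t^n]\,t^{k-1}f(t)=f_{n-k+1}$ for $k\ge1$ (with $f_j=0$ for $j\le0$); that is, its columns have generating functions $g,f,tf,t^2f,\dots$. An infinite matrix is totally positive (TP) if all its minors are nonnegative. A sequence $(a_n)_{n\ge0}$ of nonnegative reals is a Pólya frequency (PF) sequence if its Toeplitz matrix $[a_{i-j}]_{i,j\ge0}$ (with $a_m=0$ for $m<0$) is TP; a formal power series is a Pólya frequency power series if its coefficient sequence is PF. *)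

theory Defs
  imports "HOL-Computational_Algebra.Formal_Power_Series" "HOL-Combinatorics.Permutations"
begin

text \<open>Infinite matrices are functions nat => nat => real (row index first).\<close>

definition det_nat :: "nat \<Rightarrow> (nat \<Rightarrow> nat \<Rightarrow> real) \<Rightarrow> real" where
  "det_nat k M = (\<Sum>p | p permutes {..<k}. of_int (sign p) * (\<Prod>i<k. M i (p i)))"

definition minor :: "(nat \<Rightarrow> nat \<Rightarrow> real) \<Rightarrow> nat \<Rightarrow> (nat \<Rightarrow> nat) \<Rightarrow> (nat \<Rightarrow> nat) \<Rightarrow> real" where
  "minor A k r c = det_nat k (\<lambda>i j. A (r i) (c j))"

definition totally_positive :: "(nat \<Rightarrow> nat \<Rightarrow> real) \<Rightarrow> bool" where
  "totally_positive A \<longleftrightarrow>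
     (\<forall>k r c. strict_mono_on {..<k} r \<and> strict_mono_on {..<k} c \<longrightarrow> minor A k r c \<ge> 0)"

definition toeplitz :: "(nat \<Rightarrow> real) \<Rightarrow> nat \<Rightarrow> nat \<Rightarrow> real" where
  "toeplitz a i j = (if j \<le> i then a (i - j) else 0)"

definition PF_seq :: "(nat \<Rightarrow> real) \<Rightarrow> bool" where
  "PF_seq a \<longleftrightarrow> (\<forall>n. a n \<ge> 0) \<and> totally_positive (toeplitz a)"

definition PF_fps :: "real fps \<Rightarrow> bool" where
  "PF_fps f \<longleftrightarrow> PF_seq (fps_nth f)"

definition quasi_riordan :: "real fps \<Rightarrow> real fps \<Rightarrow> nat \<Rightarrow> nat \<Rightarrow> real" where
  "quasi_riordan g f n k =
     (if k = 0 then fps_nth g n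
      else if k \<le> n + 1 then fps_nth f (n + 1 - k) else 0)"

end

theory Submission
  imports Defs
begin

text \<open>Deleting the first column of the quasi-Riordan array \<open>[g, f]\<close> leaves the Toeplitz matrix
  of the coefficients of \<open>f\<close>, so every minor of that Toeplitz matrix is a minor of \<open>[g, f]\<close>.
  Its \<open>1 \<times> 1\<close> minors are the coefficients themselves, which are therefore nonnegative.\<close>

lemma det_nat_1: "det_nat 1 M = M 0 0"
proof -
  have "{p. p permutes {..<(1::nat)}} = {id}"
    by (simp add: lessThan_Suc)
  then show ?thesis
    unfolding det_nat_def by simp
qed

lemma totally_positive_nonneg:
  assumes "totally_positive A"
  shows "A i j \<ge> 0"
proof -
  have "strict_mono_on {..<1} (\<lambda>_::nat. n)" for n :: nat
    by (auto simp: strict_mono_on_def)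
  then have "minor A 1 (\<lambda>_. i) (\<lambda>_. j) \<ge> 0"
    using assms unfolding totally_positive_def by blast
  then show ?thesis
    unfolding minor_def det_nat_1 .
qed

lemma totally_positive_submatrix:
  fixes rs cs :: "nat \<Rightarrow> nat"
  assumes "totally_positive A" and "strict_mono rs" and "strict_mono cs"
  shows "totally_positive (\<lambda>i j. A (rs i) (cs j))"
  unfolding totally_positive_def
proof (intro allI impI)
  fix k :: nat and r c :: "nat \<Rightarrow> nat"
  assume "strict_mono_on {..<k} r \<and> strict_mono_on {..<k} c"
  then have "strict_mono_on {..<k} (rs \<circ> r)" and "strict_mono_on {..<k} (cs \<circ> c)"
    using assms(2,3) by (auto simp: strict_mono_on_def strict_mono_def)
  then have "minor A k (rs \<circ> r) (cs \<circ> c) \<ge> 0"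
    using assms(1) unfolding totally_positive_def by blast
  then show "minor (\<lambda>i j. A (rs i) (cs j)) k r c \<ge> 0"
    by (simp add: minor_def)
qed

lemma PF_seq_iff_totally_positive_toeplitz: "PF_seq a \<longleftrightarrow> totally_positive (toeplitz a)"
proof
  assume "totally_positive (toeplitz a)"
  then have "toeplitz a n 0 \<ge> 0" for n
    by (rule totally_positive_nonneg)
  then show "PF_seq a"
    using \<open>totally_positive (toeplitz a)\<close> by (simp add: PF_seq_def toeplitz_def)
qed (simp add: PF_seq_def)

lemma toeplitz_eq_quasi_riordan_drop_first_column:
  assumes "fps_nth f 0 = 0"
  shows "toeplitz (fps_nth f) = (\<lambda>i j. quasi_riordan g f i (Suc j))"
  using assms unfolding toeplitz_def quasi_riordan_def
  by (auto simp: fun_eq_iff Suc_diff_le)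

theorem proposition2p3:
  fixes g f :: "real fps"
  assumes "fps_nth g 0 = 1"
    and "fps_nth f 0 = 0"
    and "fps_nth f 1 \<noteq> 0"
    and "totally_positive (quasi_riordan g f)"
  shows "PF_fps f"
proof -
  have "totally_positive (\<lambda>i j. quasi_riordan g f i (Suc j))"
    using totally_positive_submatrix[OF assms(4), of id Suc]
    by (simp add: strict_mono_def)
  then show ?thesis
    unfolding PF_fps_def PF_seq_iff_totally_positive_toeplitz
      toeplitz_eq_quasi_riordan_drop_first_column[OF assms(2), where g = g] .
qed

end
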